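(* Let $n\ge3$, let $M$ be a polytope in $\mathbb{R}^n$ with nonempty interior, and let $F\sim F'$ be neighboring facets. Then for any $f\in H^1(e_{F,F'})$ and $0<\varepsilon<1$, $$l_{F,F'}^2\int_{e_{F,F'}}(f')^2\,d\mathcal{H}^1\ge(1-\varepsilon)^2\pi^2\int_{e_{F,F'}}f^2\,d\mathcal{H}^1-\frac2\varepsilon\,l_{F,F'}\{f(n_F)^2+f(n_{F'})^2\}.$$
   Context: Facets $F,F'$ of $M$ are neighbors ($F\sim F'$) if $\dim(F\cap F')=n-2$; $n_F$ denotes the outer unit normal of $F$. The edge $e_{F,F'}\subset S^{n-1}$ is the shortest geodesic arc between $n_F$ and $n_{F'}$, of length $l_{F,F'}$, parametrized by arclength; $f'$ is the derivative with respect to arclength; $H^1(e_{F,F'})$ is the Sobolev space of functions on the edge with one weak derivative in $L^2$ (these are continuous, so endpoint values make sense). $\mathcal{H}^1$ is arclength measure. *)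

theory Defs
  imports "HOL-Analysis.Analysis"
begin

definition outer_normal :: "('a::euclidean_space) set \<Rightarrow> 'a set \<Rightarrow> 'a" where
  "outer_normal M F = (THE u. norm u = 1 \<and>
      (\<exists>b. (\<forall>x\<in>M. u \<bullet> x \<le> b) \<and> F = M \<inter> {x. u \<bullet> x = b}))"

definition arc_len :: "'a::euclidean_space \<Rightarrow> 'a \<Rightarrow> real" where
  "arc_len u v = arccos (u \<bullet> v)"

text \<open>Arclength parametrisation on [0, arc_len u v] of the shortest geodesic arc
  from u to v on the unit sphere (u, v unit vectors, v \<noteq> \<plusminus>u).\<close>
definition arc_path :: "'a::euclidean_space \<Rightarrow> 'a \<Rightarrow> real \<Rightarrow> 'a" where
  "arc_path u v t = cos t *\<^sub>R u +
     sin t *\<^sub>R ((1 / norm (v - (u \<bullet> v) *\<^sub>R u)) *\<^sub>R (v - (u \<bullet> v) *\<^sub>R u))"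

definition edge_len :: "('a::euclidean_space) set \<Rightarrow> 'a set \<Rightarrow> 'a set \<Rightarrow> real" where
  "edge_len M F F' = arc_len (outer_normal M F) (outer_normal M F')"

definition edge_path :: "('a::euclidean_space) set \<Rightarrow> 'a set \<Rightarrow> 'a set \<Rightarrow> real \<Rightarrow> 'a" where
  "edge_path M F F' = arc_path (outer_normal M F) (outer_normal M F')"

definition test_fun :: "real \<Rightarrow> (real \<Rightarrow> real) \<Rightarrow> bool" where
  "test_fun l \<phi> \<longleftrightarrow> (\<forall>k x. ((deriv ^^ k) \<phi>) differentiable (at x)) \<and>
     (\<exists>a b. 0 < a \<and> b < l \<and> (\<forall>x. x \<notin> {a..b} \<longrightarrow> \<phi> x = 0))"

definition weak_deriv_L2 :: "real \<Rightarrow> (real \<Rightarrow> real) \<Rightarrow> (real \<Rightarrow> real) \<Rightarrow> bool" where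
  "weak_deriv_L2 l g h \<longleftrightarrow>
     set_borel_measurable lborel {0..l} h \<and>
     set_integrable lborel {0..l} (\<lambda>t. (h t)\<^sup>2) \<and>
     (\<forall>\<phi>. test_fun l \<phi> \<longrightarrow>
        (LINT t:{0..l}|lborel. g t * deriv \<phi> t) = - (LINT t:{0..l}|lborel. h t * \<phi> t))"

text \<open>H^1(0,l), with the continuous representative.\<close>
definition H1_on :: "real \<Rightarrow> (real \<Rightarrow> real) \<Rightarrow> bool" where
  "H1_on l g \<longleftrightarrow> continuous_on {0..l} g \<and>
     set_integrable lborel {0..l} (\<lambda>t. (g t)\<^sup>2) \<and> (\<exists>h. weak_deriv_L2 l g h)"

end

theory Submission
  imports Defs "HOL-Computational_Algebra.Polynomial"
begin

(*
  Write g = f \<circ> e for the restriction of f to the edge, parametrised by arclength on [0, l].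
  With \<omega> = (1 - \<epsilon>) \<pi> / l and \<delta> = l \<epsilon> / (2 (1 - \<epsilon>)), the weight
  W t = \<omega> cot (\<omega> (t + \<delta>)) is finite on [0, l] and solves the Riccati equation
  W' = - (\<omega>^2 + W^2). Hence (W g^2)' + \<omega>^2 g^2 = g'^2 - (g' - W g)^2 \<le> g'^2, and integrating
  over [0, l] gives \<omega>^2 \<integral> g^2 - \<omega> cot (\<pi> \<epsilon> / 2) (g(0)^2 + g(l)^2) \<le> \<integral> g'^2, because
  W(l) = - W(0) = - \<omega> cot (\<pi> \<epsilon> / 2). Multiplying by l^2 and using
  (1 - \<epsilon>) \<pi> cot (\<pi> \<epsilon> / 2) \<le> 2 / \<epsilon> gives the claim.

  Since g is only in H^1, the computation is done for the affine interpolants of g on short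
  subintervals, whose errors vanish by uniform continuity. This needs g(b) - g(a) = \<integral> g' over
  [a, b], which follows from the weak derivative identity tested against smooth plateau
  functions approximating the indicator of [a, b].
*)

section \<open>Smooth functions\<close>

definition smooth :: "(real \<Rightarrow> real) \<Rightarrow> bool" where
  "smooth f \<longleftrightarrow> (\<forall>k x. (deriv ^^ k) f differentiable (at x))"

lemma test_fun_iff_smooth:
  "test_fun l \<phi> \<longleftrightarrow> smooth \<phi> \<and> (\<exists>a b. 0 < a \<and> b < l \<and> (\<forall>x. x \<notin> {a..b} \<longrightarrow> \<phi> x = 0))"
  unfolding test_fun_def smooth_def ..

lemma smooth_coinduct:
  assumes "P f" and step: "\<And>f. P f \<Longrightarrow> (\<forall>x. f differentiable (at x)) \<and> P (deriv f)"
  shows "smooth f"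
proof -
  have "P ((deriv ^^ k) f)" for k
    by (induction k) (use assms in auto)
  then show ?thesis
    unfolding smooth_def using step by blast
qed

lemma smooth_deriv: "smooth f \<Longrightarrow> smooth (deriv f)"
  unfolding smooth_def by (metis funpow_Suc_right comp_apply)

lemma smooth_imp_differentiable: "smooth f \<Longrightarrow> f differentiable (at x)"
  unfolding smooth_def by (metis funpow_0)

lemma smooth_imp_continuous_on: "smooth f \<Longrightarrow> continuous_on S f"
  by (meson continuous_at_imp_continuous_on differentiable_imp_continuous_within smooth_imp_differentiable)

lemma smooth_if_deriv_smooth:
  assumes "\<And>x. f differentiable (at x)" "smooth (deriv f)"
  shows "smooth f"
  by (rule smooth_coinduct[where P = "\<lambda>g. g = f \<or> smooth g"])
    (use assms smooth_deriv smooth_imp_differentiable in auto)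

lemma smooth_affine_comp:
  assumes "smooth g"
  shows "smooth (\<lambda>x. k * g (a * x + b))"
proof (rule smooth_coinduct[where P = "\<lambda>f. \<exists>g k. smooth g \<and> f = (\<lambda>x. k * g (a * x + b))"])
  fix f assume "\<exists>g k. smooth g \<and> f = (\<lambda>x. k * g (a * x + b))"
  then obtain g k where g: "smooth g" and f: "f = (\<lambda>x. k * g (a * x + b))" by blast
  have d: "(f has_real_derivative (k * a) * deriv g (a * x + b)) (at x)" for x
  proof -
    have "(g has_real_derivative deriv g (a * x + b)) (at (a * x + b))"
      using smooth_imp_differentiable[OF g] by (simp add: DERIV_deriv_iff_real_differentiable)
    then show ?thesis unfolding f
      by (auto intro!: derivative_eq_intros DERIV_chain2[where f = g] simp: algebra_simps)
  qed
  then have "deriv f = (\<lambda>x. (k * a) * deriv g (a * x + b))"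
    by (intro ext DERIV_imp_deriv)
  then show "(\<forall>x. f differentiable (at x)) \<and> (\<exists>g k. smooth g \<and> deriv f = (\<lambda>x. k * g (a * x + b)))"
    using d smooth_deriv[OF g] real_differentiable_def by blast
qed (use assms in blast)

lemma smooth_diff:
  assumes "smooth f" "smooth g"
  shows "smooth (\<lambda>x. f x - g x)"
proof (rule smooth_coinduct[where P = "\<lambda>d. \<exists>f g. smooth f \<and> smooth g \<and> d = (\<lambda>x. f x - g x)"])
  fix d assume "\<exists>f g. smooth f \<and> smooth g \<and> d = (\<lambda>x. f x - g x)"
  then obtain f g where fg: "smooth f" "smooth g" and d: "d = (\<lambda>x. f x - g x)" by blast
  have dd: "(d has_real_derivative deriv f x - deriv g x) (at x)" for x
    unfolding d using fg
    by (intro derivative_eq_intros) (auto simp: DERIV_deriv_iff_real_differentiable smooth_imp_differentiable)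
  then have "deriv d = (\<lambda>x. deriv f x - deriv g x)"
    by (intro ext DERIV_imp_deriv)
  then show "(\<forall>x. d differentiable (at x)) \<and> (\<exists>f g. smooth f \<and> smooth g \<and> deriv d = (\<lambda>x. f x - g x))"
    using dd fg smooth_deriv real_differentiable_def by blast
qed (use assms in blast)

section \<open>Smooth bumps, steps and plateaus\<close>

(* bump 1 0 is the standard bump exp (-1/x - 1/(1-x)) on (0, 1); the polynomial factor and the
   power of x (1 - x) make the family closed under differentiation. *)
definition bump :: "real poly \<Rightarrow> nat \<Rightarrow> real \<Rightarrow> real" where
  "bump p m x =
     (if 0 < x \<and> x < 1 then poly p x * exp (- 1 / x - 1 / (1 - x)) / (x * (1 - x)) ^ m else 0)"

(* With D = x (1 - x) and e = exp (-1/x - 1/(1-x)) one has e' = e D' / D^2, hence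
   (P e / D^m)' = (P' D^2 + P D' - m P D D') e / D^(m+2). *)
definition bump_deriv_poly :: "real poly \<Rightarrow> nat \<Rightarrow> real poly" where
  "bump_deriv_poly p m =
     pderiv p * [:0, 1, -1:] ^ 2 + p * [:1, -2:] - smult (of_nat m) (p * [:1, -2:] * [:0, 1, -1:])"

lemma bump_outside: "x \<le> 0 \<or> 1 \<le> x \<Longrightarrow> bump p m x = 0"
  by (auto simp: bump_def)

lemma bump_reflect: "bump p m (1 - x) = bump (pcompose p [:1, -1:]) m x"
  by (simp add: bump_def poly_pcompose mult.commute add.commute)

lemma bump_has_derivative_inside:
  assumes x: "0 < x" "x < 1"
  shows "(bump p m has_real_derivative bump (bump_deriv_poly p m) (m + 2) x) (at x)"
proof -
  define D where "D = x * (1 - x)"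
  define D' where "D' = 1 - 2 * x"
  define e where "e = exp (- 1 / x - 1 / (1 - x))"
  have D0: "D \<noteq> 0" using x unfolding D_def by simp
  have dE: "((\<lambda>y. exp (- 1 / y - 1 / (1 - y))) has_real_derivative e * (D' / D\<^sup>2)) (at x)"
  proof -
    have "((\<lambda>y. - 1 / y - 1 / (1 - y)) has_real_derivative 1 / x\<^sup>2 - 1 / (1 - x)\<^sup>2) (at x)"
      using x by (auto intro!: derivative_eq_intros simp: field_simps power2_eq_square)
    moreover have "1 / x\<^sup>2 - 1 / (1 - x)\<^sup>2 = D' / D\<^sup>2"
      using x unfolding D_def D'_def by (simp add: divide_simps power2_eq_square) algebra
    ultimately show ?thesis
      unfolding e_def by (intro DERIV_chain2[OF DERIV_exp]) simp
  qed
  have dDm: "((\<lambda>y. (y * (1 - y)) ^ m) has_real_derivative of_nat m * D ^ m / D * D') (at x)"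
  proof -
    have "((\<lambda>y. (y * (1 - y)) ^ m) has_real_derivative of_nat m * D ^ (m - 1) * D') (at x)"
      unfolding D_def D'_def by (auto intro!: derivative_eq_intros)
    moreover have "D ^ (m - 1) = D ^ m / D" if "m > 0"
      using that D0 by (simp add: power_diff)
    ultimately show ?thesis by (cases "m = 0") auto
  qed
  have "((\<lambda>y. poly p y * exp (- 1 / y - 1 / (1 - y)) / (y * (1 - y)) ^ m) has_real_derivative
      ((poly (pderiv p) x * e + e * (D' / D\<^sup>2) * poly p x) * D ^ m
        - poly p x * e * (of_nat m * D ^ m / D * D')) / (D ^ m * D ^ m)) (at x)"
    using DERIV_divide[OF DERIV_mult[OF poly_DERIV dE] dDm] D0 unfolding D_def e_def by simp
  also have "((poly (pderiv p) x * e + e * (D' / D\<^sup>2) * poly p x) * D ^ m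
        - poly p x * e * (of_nat m * D ^ m / D * D')) / (D ^ m * D ^ m)
      = (poly (pderiv p) x * D\<^sup>2 + poly p x * D' - of_nat m * poly p x * D' * D) * e / (D ^ m * D\<^sup>2)"
    using D0 by (simp add: field_simps power2_eq_square)
  also have "\<dots> = bump (bump_deriv_poly p m) (m + 2) x"
    using x unfolding bump_def bump_deriv_poly_def D_def D'_def e_def
    by (simp add: algebra_simps power_add power2_eq_square)
  finally show ?thesis
    by (rule has_field_derivative_transform_within_open[of _ _ _ "{0<..<1}"])
      (use x in \<open>auto simp: bump_def\<close>)
qed

lemma exp_neg_inverse_over_power_tendsto_0:
  "((\<lambda>y. exp (- 1 / y) / y ^ k) \<longlongrightarrow> 0) (at_right (0::real))"
proof -
  have "((\<lambda>y. (inverse y) ^ k / exp (inverse y)) \<longlongrightarrow> 0) (at_right (0::real))"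
    using filterlim_compose[OF tendsto_power_div_exp_0 filterlim_inverse_at_top_right] by simp
  moreover have "\<forall>\<^sub>F y in at_right (0::real). (inverse y) ^ k / exp (inverse y) = exp (- 1 / y) / y ^ k"
  proof (rule eventually_mono[OF eventually_at_right_less[of 0]])
    fix y :: real assume "0 < y"
    have "exp (- 1 / y) = inverse (exp (inverse y))" by (simp add: exp_minus inverse_eq_divide)
    then show "(inverse y) ^ k / exp (inverse y) = exp (- 1 / y) / y ^ k"
      by (simp add: power_inverse divide_inverse mult.commute)
  qed
  ultimately show ?thesis by (rule Lim_transform_eventually)
qed

lemma bump_has_derivative_0: "(bump p m has_real_derivative 0) (at 0)"
  unfolding has_field_derivative_iff
proof (rule filterlim_split_at)
  show "((\<lambda>y. (bump p m y - bump p m 0) / (y - 0)) \<longlongrightarrow> 0) (at_left 0)"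
    by (rule Lim_transform_eventually[OF tendsto_const], rule eventually_at_leftI[of "-1"])
      (auto simp: bump_def)
  define c where "c y = poly p y * exp (- 1 / (1 - y)) / (1 - y) ^ m" for y
  have "isCont c 0"
    unfolding c_def by (intro continuous_intros) simp_all
  then have "((\<lambda>y. c y * (exp (- 1 / y) / y ^ (m + 1))) \<longlongrightarrow> c 0 * 0) (at_right 0)"
    by (intro tendsto_mult exp_neg_inverse_over_power_tendsto_0)
      (simp add: isCont_def filterlim_at_split)
  moreover have "c y * (exp (- 1 / y) / y ^ (m + 1)) = (bump p m y - bump p m 0) / (y - 0)"
    if "0 < y" "y < 1" for y
  proof -
    have "bump p m y = poly p y * (exp (- 1 / y) * exp (- 1 / (1 - y))) / (y ^ m * (1 - y) ^ m)"
      using that by (simp add: bump_def power_mult_distrib exp_add[symmetric])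
    then show ?thesis
      using that by (simp add: bump_outside c_def field_simps)
  qed
  then have "\<forall>\<^sub>F y in at_right 0. c y * (exp (- 1 / y) / y ^ (m + 1)) = (bump p m y - bump p m 0) / (y - 0)"
    by (intro eventually_at_rightI[of 0 1]) auto
  ultimately show "((\<lambda>y. (bump p m y - bump p m 0) / (y - 0)) \<longlongrightarrow> 0) (at_right 0)"
    by (simp add: Lim_transform_eventually)
qed

lemma bump_has_derivative_1: "(bump p m has_real_derivative 0) (at 1)"
proof -
  have "(bump (pcompose p [:1, -1:]) m has_real_derivative 0) (at (1 - 1))"
    using bump_has_derivative_0 by simp
  moreover have "((\<lambda>y. 1 - y) has_real_derivative - 1) (at 1)"
    by (auto intro!: derivative_eq_intros)
  ultimately have "((\<lambda>y. bump (pcompose p [:1, -1:]) m (1 - y)) has_real_derivative 0 * - 1) (at 1)"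
    by (rule DERIV_chain2)
  moreover have "(\<lambda>y. bump (pcompose p [:1, -1:]) m (1 - y)) = bump p m"
    using bump_reflect[of p m "1 - _"] by auto
  ultimately show ?thesis by simp
qed

lemma bump_has_derivative: "(bump p m has_real_derivative bump (bump_deriv_poly p m) (m + 2) x) (at x)"
proof -
  consider "0 < x \<and> x < 1" | "x = 0" | "x = 1" | "x < 0 \<or> 1 < x" by linarith
  then show ?thesis
  proof cases
    case 1
    then show ?thesis using bump_has_derivative_inside by blast
  next
    case 2
    then show ?thesis using bump_has_derivative_0 by (simp add: bump_outside)
  next
    case 3
    then show ?thesis using bump_has_derivative_1 by (simp add: bump_outside)
  next
    case 4
    have "((\<lambda>y. 0) has_real_derivative 0) (at x)" by simp
    then have "(bump p m has_real_derivative 0) (at x)"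
      by (rule has_field_derivative_transform_within_open[where S = "{..<0} \<union> {1<..}"])
        (use 4 in \<open>auto simp: bump_outside\<close>)
    moreover have "bump (bump_deriv_poly p m) (m + 2) x = 0"
      using 4 by (intro bump_outside) auto
    ultimately show ?thesis by simp
  qed
qed

lemma smooth_bump: "smooth (bump p m)"
proof (rule smooth_coinduct[where P = "\<lambda>f. \<exists>p m. f = bump p m"])
  fix f assume "\<exists>p m. f = bump p m"
  then obtain p m where f: "f = bump p m" by blast
  have "deriv f = bump (bump_deriv_poly p m) (m + 2)"
    unfolding f by (intro ext DERIV_imp_deriv bump_has_derivative)
  then show "(\<forall>x. f differentiable (at x)) \<and> (\<exists>p m. deriv f = bump p m)"
    unfolding f using bump_has_derivative real_differentiable_def by blast
qed auto

definition std_bump :: "real \<Rightarrow> real" where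
  "std_bump = bump 1 0"

definition bump_mass :: real where
  "bump_mass = integral {0..1} std_bump"

(* Integrating from -1 rather than 0 keeps x = 0 in the interior of the range of integration. *)
definition smooth_step :: "real \<Rightarrow> real" where
  "smooth_step x = integral {-1..x} std_bump / bump_mass"

lemma std_bump_eq: "std_bump x = (if 0 < x \<and> x < 1 then exp (- 1 / x - 1 / (1 - x)) else 0)"
  unfolding std_bump_def bump_def by simp

lemma std_bump_nonneg: "0 \<le> std_bump x"
  unfolding std_bump_eq by simp

lemma std_bump_outside: "x \<le> 0 \<or> 1 \<le> x \<Longrightarrow> std_bump x = 0"
  unfolding std_bump_eq by auto

lemma smooth_std_bump: "smooth std_bump"
  unfolding std_bump_def by (rule smooth_bump)

lemma continuous_on_std_bump: "continuous_on S std_bump"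
  by (rule smooth_imp_continuous_on[OF smooth_std_bump])

lemma std_bump_integrable: "std_bump integrable_on {a..b}"
  by (rule integrable_continuous_interval[OF continuous_on_std_bump])

lemma integral_std_bump_eq_0: "u \<le> 0 \<Longrightarrow> integral {a..u} std_bump = 0"
  by (subst integral_cong[of _ _ "\<lambda>_. 0"]) (auto intro: std_bump_outside)

lemma bump_mass_pos: "0 < bump_mass"
proof -
  have lower: "exp (-8) \<le> std_bump x" if "x \<in> {1/4..3/4}" for x
  proof -
    have "1 / x \<le> 4" "1 / (1 - x) \<le> 4"
      using that by (auto simp: divide_simps)
    then have "-8 \<le> - 1 / x - 1 / (1 - x)" by simp
    then show ?thesis
      using that by (simp add: std_bump_eq)
  qed
  have "0 < integral {1/4..3/4::real} (\<lambda>_. exp (-8::real))" by simp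
  also have "\<dots> \<le> integral {1/4..3/4} std_bump"
    using lower by (intro integral_le std_bump_integrable) auto
  also have "\<dots> \<le> integral {0..1/4} std_bump + integral {1/4..3/4} std_bump + integral {3/4..1} std_bump"
    using integral_nonneg[OF std_bump_integrable std_bump_nonneg, of 0 "1/4"]
      integral_nonneg[OF std_bump_integrable std_bump_nonneg, of "3/4" 1] by linarith
  also have "\<dots> = bump_mass"
  proof -
    have "integral {0..1/4} std_bump + integral {1/4..1} std_bump = bump_mass"
      unfolding bump_mass_def by (intro Henstock_Kurzweil_Integration.integral_combine std_bump_integrable) auto
    moreover have "integral {1/4..3/4} std_bump + integral {3/4..1} std_bump = integral {1/4..1} std_bump"
      by (intro Henstock_Kurzweil_Integration.integral_combine std_bump_integrable) auto
    ultimately show ?thesis by simp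
  qed
  finally show ?thesis .
qed

lemma smooth_step_eq_0: "x \<le> 0 \<Longrightarrow> smooth_step x = 0"
  unfolding smooth_step_def by (simp add: integral_std_bump_eq_0)

lemma integral_std_bump_from: "0 \<le> x \<Longrightarrow> integral {-1..x} std_bump = integral {0..x} std_bump"
  using Henstock_Kurzweil_Integration.integral_combine[of "-1" 0 x std_bump]
  by (simp add: std_bump_integrable integral_std_bump_eq_0)

lemma smooth_step_eq_1: "1 \<le> x \<Longrightarrow> smooth_step x = 1"
proof -
  assume "1 \<le> x"
  have "integral {0..x} std_bump = bump_mass + integral {1..x} std_bump"
    unfolding bump_mass_def using \<open>1 \<le> x\<close>
    by (intro Henstock_Kurzweil_Integration.integral_combine[symmetric] std_bump_integrable) auto
  also have "integral {1..x} std_bump = 0"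
    by (subst integral_cong[of _ _ "\<lambda>_. 0"]) (auto intro: std_bump_outside)
  finally show ?thesis
    using \<open>1 \<le> x\<close> bump_mass_pos by (simp add: smooth_step_def integral_std_bump_from)
qed

lemma smooth_step_bounds: "0 \<le> smooth_step x \<and> smooth_step x \<le> 1"
proof (cases "0 \<le> x \<and> x \<le> 1")
  case True
  then have "integral {0..x} std_bump + integral {x..1} std_bump = bump_mass"
    unfolding bump_mass_def
    by (intro Henstock_Kurzweil_Integration.integral_combine std_bump_integrable) auto
  moreover have "0 \<le> integral {0..x} std_bump" "0 \<le> integral {x..1} std_bump"
    by (auto intro!: integral_nonneg std_bump_integrable std_bump_nonneg)
  ultimately show ?thesis
    using True bump_mass_pos by (simp add: smooth_step_def integral_std_bump_from)
qed (auto simp: smooth_step_eq_0 smooth_step_eq_1)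

lemma smooth_step_has_derivative: "(smooth_step has_real_derivative std_bump x / bump_mass) (at x)"
proof (cases "x < -1/2")
  case True
  have "((\<lambda>y. 0) has_real_derivative 0) (at x)" by simp
  then have "(smooth_step has_real_derivative 0) (at x)"
    by (rule has_field_derivative_transform_within_open[where S = "{..<0}"])
      (use True in \<open>auto simp: smooth_step_eq_0\<close>)
  then show ?thesis using True by (simp add: std_bump_outside)
next
  case False
  have "((\<lambda>u. integral {-1..u} std_bump) has_real_derivative std_bump x) (at x within {-1..x+1})"
    using False by (intro integral_has_real_derivative continuous_on_std_bump) auto
  moreover have "x \<in> interior {-1..x+1}"
    using False by simp
  ultimately have "((\<lambda>u. integral {-1..u} std_bump) has_real_derivative std_bump x) (at x)"
    by (simp only: at_within_interior)
  then show ?thesis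
    unfolding smooth_step_def[abs_def] by (rule DERIV_cdivide)
qed

lemma smooth_smooth_step: "smooth smooth_step"
proof (rule smooth_if_deriv_smooth)
  show "smooth_step differentiable (at x)" for x
    using smooth_step_has_derivative real_differentiable_def by blast
  have "deriv smooth_step = (\<lambda>x. (1 / bump_mass) * std_bump (1 * x + 0))"
    by (intro ext DERIV_imp_deriv) (use smooth_step_has_derivative in simp)
  then show "smooth (deriv smooth_step)"
    by (simp only: smooth_affine_comp smooth_std_bump)
qed

definition ramp :: "real \<Rightarrow> real \<Rightarrow> real \<Rightarrow> real" where
  "ramp c r x = smooth_step ((x - c) / r)"

definition ramp_density :: "real \<Rightarrow> real \<Rightarrow> real \<Rightarrow> real" where
  "ramp_density c r x = std_bump ((x - c) / r) / (bump_mass * r)"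

definition plateau :: "real \<Rightarrow> real \<Rightarrow> real \<Rightarrow> real \<Rightarrow> real" where
  "plateau a b r x = ramp a r x - ramp (b - r) r x"

lemma ramp_has_derivative:
  assumes "r \<noteq> 0"
  shows "(ramp c r has_real_derivative ramp_density c r x) (at x)"
proof -
  have "((\<lambda>x. (x - c) / r) has_real_derivative 1 / r) (at x)"
    using assms by (auto intro!: derivative_eq_intros)
  from DERIV_chain2[OF smooth_step_has_derivative this] show ?thesis
    unfolding ramp_def[abs_def] ramp_density_def by simp
qed

lemma ramp_eq_0: "0 < r \<Longrightarrow> x \<le> c \<Longrightarrow> ramp c r x = 0"
  unfolding ramp_def by (simp add: smooth_step_eq_0 divide_nonpos_pos)

lemma ramp_eq_1: "0 < r \<Longrightarrow> c + r \<le> x \<Longrightarrow> ramp c r x = 1"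
  unfolding ramp_def by (simp add: smooth_step_eq_1 le_divide_eq)

lemma ramp_bounds: "0 \<le> ramp c r x \<and> ramp c r x \<le> 1"
  unfolding ramp_def by (rule smooth_step_bounds)

lemma smooth_ramp: "smooth (ramp c r)"
proof -
  have "ramp c r = (\<lambda>x. 1 * smooth_step ((1 / r) * x + (- c / r)))"
    unfolding ramp_def by (intro ext) (simp add: diff_divide_distrib)
  then show ?thesis
    by (simp only: smooth_affine_comp smooth_smooth_step)
qed

lemma continuous_on_ramp_density: "continuous_on S (ramp_density c r)"
proof -
  have "ramp_density c r = (\<lambda>x. (1 / (bump_mass * r)) * std_bump ((1 / r) * x + (- c / r)))"
    unfolding ramp_density_def by (intro ext) (simp add: diff_divide_distrib)
  then show ?thesis
    by (simp only: smooth_imp_continuous_on smooth_affine_comp smooth_std_bump)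
qed

lemma ramp_density_nonneg: "0 < r \<Longrightarrow> 0 \<le> ramp_density c r x"
  unfolding ramp_density_def using std_bump_nonneg bump_mass_pos by simp

lemma ramp_density_outside: "0 < r \<Longrightarrow> x \<notin> {c..c + r} \<Longrightarrow> ramp_density c r x = 0"
  unfolding ramp_density_def
  by (rule divide_eq_0_iff[THEN iffD2], rule disjI1, rule std_bump_outside)
    (auto simp: divide_nonpos_pos le_divide_eq not_le)

lemma ramp_density_has_integral: "0 < r \<Longrightarrow> (ramp_density c r has_integral 1) {c..c + r}"
  using fundamental_theorem_of_calculus[of c "c + r" "ramp c r" "ramp_density c r"]
    ramp_has_derivative[of r c] ramp_eq_0[of r c c] ramp_eq_1[of r c "c + r"]
  by (simp add: has_real_derivative_iff_has_vector_derivative[symmetric] has_field_derivative_at_within)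

lemma plateau_eq_0:
  assumes "0 < r" "2 * r \<le> b - a" "x \<notin> {a..b}"
  shows "plateau a b r x = 0"
  using assms ramp_eq_0[of r] ramp_eq_1[of r] unfolding plateau_def
  by (cases "x < a") auto

lemma plateau_eq_1: "0 < r \<Longrightarrow> x \<in> {a + r..b - r} \<Longrightarrow> plateau a b r x = 1"
  unfolding plateau_def by (simp add: ramp_eq_0 ramp_eq_1)

lemma plateau_bounds:
  assumes "0 < r" "2 * r \<le> b - a"
  shows "0 \<le> plateau a b r x \<and> plateau a b r x \<le> 1"
proof (cases "x \<le> b - r")
  case True
  then have "ramp (b - r) r x = 0"
    using assms by (intro ramp_eq_0) auto
  then show ?thesis
    using ramp_bounds[of a r x] unfolding plateau_def by simp
next
  case False
  then have "ramp a r x = 1"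
    using assms by (intro ramp_eq_1) auto
  then show ?thesis
    using ramp_bounds[of "b - r" r x] unfolding plateau_def by simp
qed

lemma continuous_on_plateau: "r \<noteq> 0 \<Longrightarrow> continuous_on S (plateau a b r)"
  unfolding plateau_def[abs_def]
  by (intro continuous_intros smooth_imp_continuous_on smooth_ramp)

lemma deriv_plateau:
  "r \<noteq> 0 \<Longrightarrow> deriv (plateau a b r) = (\<lambda>x. ramp_density a r x - ramp_density (b - r) r x)"
  unfolding plateau_def[abs_def]
  by (intro ext DERIV_imp_deriv DERIV_diff ramp_has_derivative)

lemma test_fun_plateau:
  assumes "0 < a" "b < l" "0 < r" "2 * r \<le> b - a"
  shows "test_fun l (plateau a b r)"
  unfolding test_fun_iff_smooth plateau_def[abs_def]
  using assms plateau_eq_0[of r b a] unfolding plateau_def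
  by (auto intro!: smooth_diff smooth_ramp)

section \<open>Weak derivatives\<close>

lemma integral_eq_integral_on_support:
  fixes f :: "real \<Rightarrow> real"
  assumes "f integrable_on {u..v}" "{u..v} \<subseteq> {p..q}" "\<And>x. x \<notin> {u..v} \<Longrightarrow> f x = 0"
  shows "integral {p..q} f = integral {u..v} f"
  by (rule integral_unique, rule has_integral_on_superset[OF integrable_integral[OF assms(1)]])
    (use assms in auto)

lemma absolutely_integrable_mult_continuous:
  fixes h f :: "real \<Rightarrow> real"
  assumes "h absolutely_integrable_on {u..v}" "continuous_on {u..v} f"
  shows "(\<lambda>x. h x * f x) integrable_on {u..v}"
proof -
  have "(\<lambda>x. f x * h x) absolutely_integrable_on {u..v}"
  proof (rule absolutely_integrable_bounded_measurable_product_real)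
    show "f \<in> borel_measurable (lebesgue_on {u..v})"
      using assms(2) by (rule continuous_imp_measurable_on_sets_lebesgue) simp
    show "bounded (f ` {u..v})"
      using assms(2) by (intro compact_imp_bounded compact_continuous_image) auto
  qed (use assms in auto)
  then show ?thesis
    unfolding absolutely_integrable_on_def by (simp add: mult.commute)
qed

lemma integral_mult_ramp_density_close:
  fixes g :: "real \<Rightarrow> real"
  assumes "0 < r" "{c..c + r} \<subseteq> {p..q}" "continuous_on {c..c + r} g"
    and close: "\<And>x. x \<in> {c..c + r} \<Longrightarrow> \<bar>g x - y\<bar> \<le> e"
  shows "\<bar>integral {p..q} (\<lambda>x. g x * ramp_density c r x) - y\<bar> \<le> e"
proof -
  let ?\<rho> = "ramp_density c r"
  have \<rho>: "(?\<rho> has_integral 1) {c..c + r}"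
    using assms(1) by (rule ramp_density_has_integral)
  have "(\<lambda>x. (g x - y) * ?\<rho> x) integrable_on {c..c + r}"
    by (intro integrable_continuous_interval continuous_intros assms(3) continuous_on_ramp_density)
  then have "((\<lambda>x. (g x - y) * ?\<rho> x + y * ?\<rho> x) has_integral
      integral {c..c + r} (\<lambda>x. (g x - y) * ?\<rho> x) + y * 1) {c..c + r}"
    by (intro has_integral_add has_integral_mult_right \<rho> integrable_integral)
  then have "integral {c..c + r} (\<lambda>x. g x * ?\<rho> x) - y = integral {c..c + r} (\<lambda>x. (g x - y) * ?\<rho> x)"
    by (simp add: integral_unique algebra_simps)
  moreover have "integral {p..q} (\<lambda>x. g x * ?\<rho> x) = integral {c..c + r} (\<lambda>x. g x * ?\<rho> x)"
    using assms(1,2)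
    by (intro integral_eq_integral_on_support integrable_continuous_interval continuous_intros
        assms(3) continuous_on_ramp_density) (auto simp: ramp_density_outside)
  moreover have "norm (integral {c..c + r} (\<lambda>x. (g x - y) * ?\<rho> x)) \<le> integral {c..c + r} (\<lambda>x. e * ?\<rho> x)"
    using close assms(1)
    by (intro integral_norm_bound_integral integrable_continuous_interval continuous_intros assms(3)
        continuous_on_ramp_density) (auto simp: abs_mult ramp_density_nonneg mult_right_mono)
  moreover have "integral {c..c + r} ?\<rho> = 1"
    using \<rho> by (rule integral_unique)
  ultimately show ?thesis by simp
qed

lemma integral_mult_plateau_close:
  fixes h :: "real \<Rightarrow> real"
  assumes h: "h absolutely_integrable_on {a..b}" and r: "0 < r" "2 * r \<le> b - a"
    and sub: "{a..b} \<subseteq> {p..q}"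
  shows "\<bar>integral {a..b} h - integral {p..q} (\<lambda>x. h x * plateau a b r x)\<bar>
    \<le> integral {a..a + r} (\<lambda>x. \<bar>h x\<bar>) + integral {b - r..b} (\<lambda>x. \<bar>h x\<bar>)"
proof -
  define \<phi> where "\<phi> = plateau a b r"
  have cont: "continuous_on S \<phi>" "continuous_on S (\<lambda>x. 1 - \<phi> x)" for S
    unfolding \<phi>_def using r by (auto intro!: continuous_intros continuous_on_plateau)
  have int_\<phi>: "(\<lambda>x. h x * \<phi> x) integrable_on {a..b}"
    by (intro absolutely_integrable_mult_continuous h cont)
  have int: "(\<lambda>x. h x * (1 - \<phi> x)) integrable_on {u..v}" if "a \<le> u" "v \<le> b" for u v
    using absolutely_integrable_on_subinterval[OF h] that
    by (auto intro!: absolutely_integrable_mult_continuous cont)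
  have bound: "\<bar>integral {u..v} (\<lambda>x. h x * (1 - \<phi> x))\<bar> \<le> integral {u..v} (\<lambda>x. \<bar>h x\<bar>)"
    if "a \<le> u" "v \<le> b" for u v
  proof -
    have "\<bar>1 - \<phi> x\<bar> \<le> 1" for x
      using plateau_bounds[OF r, of x] unfolding \<phi>_def by simp
    then have "norm (integral {u..v} (\<lambda>x. h x * (1 - \<phi> x))) \<le> integral {u..v} (\<lambda>x. \<bar>h x\<bar>)"
      using that absolutely_integrable_on_subinterval[OF h, of u v]
      by (intro integral_norm_bound_integral int)
        (auto simp: abs_mult absolutely_integrable_on_def mult_left_le)
    then show ?thesis by simp
  qed
  have "integral {p..q} (\<lambda>x. h x * \<phi> x) = integral {a..b} (\<lambda>x. h x * \<phi> x)"
    using int_\<phi> sub plateau_eq_0[OF r] unfolding \<phi>_def by (intro integral_eq_integral_on_support) auto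
  moreover have "integral {a..b} h - integral {a..b} (\<lambda>x. h x * \<phi> x) = integral {a..b} (\<lambda>x. h x * (1 - \<phi> x))"
  proof -
    have "integral {a..b} (\<lambda>x. h x - h x * \<phi> x) = integral {a..b} h - integral {a..b} (\<lambda>x. h x * \<phi> x)"
      using h int_\<phi> by (intro integral_diff) (auto simp: absolutely_integrable_on_def)
    then show ?thesis by (simp add: right_diff_distrib)
  qed
  moreover have "integral {a..b} (\<lambda>x. h x * (1 - \<phi> x)) = integral {a..a + r} (\<lambda>x. h x * (1 - \<phi> x))
      + integral {a + r..b - r} (\<lambda>x. h x * (1 - \<phi> x)) + integral {b - r..b} (\<lambda>x. h x * (1 - \<phi> x))"
    using r int by (simp add: Henstock_Kurzweil_Integration.integral_combine)
  moreover have "integral {a + r..b - r} (\<lambda>x. h x * (1 - \<phi> x)) = 0"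
    using plateau_eq_1[OF r(1)] unfolding \<phi>_def by (subst integral_cong[of _ _ "\<lambda>_. 0"]) auto
  moreover have "\<bar>integral {a..a + r} (\<lambda>x. h x * (1 - \<phi> x))\<bar> \<le> integral {a..a + r} (\<lambda>x. \<bar>h x\<bar>)"
    "\<bar>integral {b - r..b} (\<lambda>x. h x * (1 - \<phi> x))\<bar> \<le> integral {b - r..b} (\<lambda>x. \<bar>h x\<bar>)"
    using r by (intro bound; simp)+
  ultimately show ?thesis
    unfolding \<phi>_def[symmetric] by arith
qed

lemma integral_combine_eq_diff:
  fixes f :: "real \<Rightarrow> real"
  assumes "f integrable_on {p..q}" "p \<le> u" "u \<le> v" "v \<le> q"
  shows "integral {u..v} f = integral {p..v} f - integral {p..u} f"
  using Henstock_Kurzweil_Integration.integral_combine[of p u v f]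
    integrable_on_subinterval[OF assms(1), of p v] assms
  by simp

lemma nonpos_if_le_multiples_of_small:
  fixes x C :: real
  assumes "\<And>\<eta>. 0 < \<eta> \<Longrightarrow> \<eta> \<le> 1 \<Longrightarrow> x \<le> C * \<eta>"
  shows "x \<le> 0"
proof (cases "C \<le> 0")
  case True
  then show ?thesis
    using assms[of 1] by simp
next
  case False
  have "x \<le> 0 + e" if "0 < e" for e
  proof -
    define \<eta> where "\<eta> = min 1 (e / C)"
    have "0 < \<eta>" "\<eta> \<le> 1" "C * \<eta> \<le> e"
      using False that unfolding \<eta>_def by (auto simp: min_def field_simps)
    then show ?thesis
      using assms[of \<eta>] by simp
  qed
  then show ?thesis
    by (rule field_le_epsilon)
qed

definition weak_deriv_HK :: "real \<Rightarrow> (real \<Rightarrow> real) \<Rightarrow> (real \<Rightarrow> real) \<Rightarrow> bool" where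
  "weak_deriv_HK l g h \<longleftrightarrow> (\<forall>\<phi>. test_fun l \<phi> \<longrightarrow>
     integral {0..l} (\<lambda>t. g t * deriv \<phi> t) = - integral {0..l} (\<lambda>t. h t * \<phi> t))"

(* The derivative of the plateau consists of two unit-mass spikes, on [a, a + r] and on
   [b - r, b], which average g near a and near b. *)
lemma weak_deriv_increment_approx:
  fixes g h :: "real \<Rightarrow> real"
  assumes g: "continuous_on {0..l} g" and h: "h absolutely_integrable_on {0..l}"
    and weak: "weak_deriv_HK l g h"
    and ab: "0 < a" "b < l" and r: "0 < r" "2 * r \<le> b - a"
    and close: "\<And>x. x \<in> {a..a + r} \<Longrightarrow> \<bar>g x - g a\<bar> \<le> e" "\<And>x. x \<in> {b - r..b} \<Longrightarrow> \<bar>g x - g b\<bar> \<le> e"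
  shows "\<bar>g b - g a - integral {a..b} h\<bar>
    \<le> 2 * e + integral {a..a + r} (\<lambda>x. \<bar>h x\<bar>) + integral {b - r..b} (\<lambda>x. \<bar>h x\<bar>)"
proof -
  have sub: "{a..b} \<subseteq> {0..l}"
    using ab by auto
  have cont: "continuous_on {0..l} (\<lambda>t. g t * ramp_density c r t)" for c
    by (intro continuous_intros g continuous_on_ramp_density)
  have "integral {0..l} (\<lambda>t. g t * ramp_density a r t) - integral {0..l} (\<lambda>t. g t * ramp_density (b - r) r t)
      = - integral {0..l} (\<lambda>t. h t * plateau a b r t)"
    using weak[unfolded weak_deriv_HK_def, rule_format, OF test_fun_plateau[OF ab r]] r
    by (simp add: deriv_plateau right_diff_distrib integral_diff integrable_continuous_interval cont)
  moreover have "\<bar>integral {0..l} (\<lambda>t. g t * ramp_density a r t) - g a\<bar> \<le> e"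
    using r sub close(1)
    by (intro integral_mult_ramp_density_close continuous_on_subset[OF g]) auto
  moreover have "\<bar>integral {0..l} (\<lambda>t. g t * ramp_density (b - r) r t) - g b\<bar> \<le> e"
    using r sub close(2)
    by (intro integral_mult_ramp_density_close continuous_on_subset[OF g]) auto
  moreover have "\<bar>integral {a..b} h - integral {0..l} (\<lambda>t. h t * plateau a b r t)\<bar>
      \<le> integral {a..a + r} (\<lambda>x. \<bar>h x\<bar>) + integral {b - r..b} (\<lambda>x. \<bar>h x\<bar>)"
    using r sub by (intro integral_mult_plateau_close absolutely_integrable_on_subinterval[OF h])
  ultimately show ?thesis
    unfolding abs_le_iff by (intro conjI) linarith+
qed

lemma weak_deriv_increment_interior:
  fixes g h :: "real \<Rightarrow> real"
  assumes g: "continuous_on {0..l} g" and h: "h absolutely_integrable_on {0..l}"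
    and weak: "weak_deriv_HK l g h"
    and ab: "0 < a" "a < b" "b < l"
  shows "g b - g a = integral {a..b} h"
proof -
  define F where "F x = integral {0..x} (\<lambda>t. \<bar>h t\<bar>)" for x
  have habs: "(\<lambda>t. \<bar>h t\<bar>) integrable_on {0..l}"
    using h by (simp add: absolutely_integrable_on_def)
  have "\<bar>g b - g a - integral {a..b} h\<bar> \<le> 4 * e" if "0 < e" for e
  proof -
    have "uniformly_continuous_on {0..l} g" "uniformly_continuous_on {0..l} F"
      unfolding F_def[abs_def]
      by (intro compact_uniformly_continuous g indefinite_integral_continuous_1 habs compact_Icc)+
    then obtain d1 d2 where d: "d1 > 0" "d2 > 0"
      and d1: "\<forall>x\<in>{0..l}. \<forall>y\<in>{0..l}. dist y x < d1 \<longrightarrow> dist (g y) (g x) < e"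
      and d2: "\<forall>x\<in>{0..l}. \<forall>y\<in>{0..l}. dist y x < d2 \<longrightarrow> dist (F y) (F x) < e"
      using \<open>0 < e\<close> unfolding uniformly_continuous_on_def by blast
    define r where "r = min (min d1 d2) (b - a) / 2"
    have r: "0 < r" "2 * r \<le> b - a"
      using d ab unfolding r_def by auto
    have close: "\<bar>g x - g y\<bar> \<le> e \<and> \<bar>F x - F y\<bar> \<le> e"
      if "x \<in> {0..l}" "y \<in> {0..l}" "\<bar>x - y\<bar> \<le> r" for x y
      using that d d1[rule_format, of y x] d2[rule_format, of y x] ab
      unfolding r_def dist_real_def by auto
    have "integral {a..a + r} (\<lambda>x. \<bar>h x\<bar>) = F (a + r) - F a"
      "integral {b - r..b} (\<lambda>x. \<bar>h x\<bar>) = F b - F (b - r)"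
      using r ab integral_combine_eq_diff[OF habs, of a "a + r"] integral_combine_eq_diff[OF habs, of "b - r" b]
      unfolding F_def by simp_all
    moreover have "\<bar>F (a + r) - F a\<bar> \<le> e" "\<bar>F b - F (b - r)\<bar> \<le> e"
      using r ab close[of "a + r" a] close[of b "b - r"] by auto
    moreover have "\<bar>g b - g a - integral {a..b} h\<bar>
        \<le> 2 * e + integral {a..a + r} (\<lambda>x. \<bar>h x\<bar>) + integral {b - r..b} (\<lambda>x. \<bar>h x\<bar>)"
      using r ab close by (intro weak_deriv_increment_approx[OF g h weak]) auto
    ultimately show ?thesis
      by linarith
  qed
  then have "\<bar>g b - g a - integral {a..b} h\<bar> \<le> 0"
    by (intro nonpos_if_le_multiples_of_small) auto
  then show ?thesis
    by simp
qed

lemma weak_deriv_increment: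
  fixes g h :: "real \<Rightarrow> real"
  assumes g: "continuous_on {0..l} g" and h: "h absolutely_integrable_on {0..l}"
    and weak: "weak_deriv_HK l g h"
    and ab: "0 \<le> a" "a \<le> b" "b \<le> l"
  shows "g b - g a = integral {a..b} h"
proof (cases "a = b")
  case False
  then have l: "0 < l" using ab by linarith
  have h_int: "h integrable_on {0..l}"
    using h by (simp add: absolutely_integrable_on_def)
  define H where "H x = g x - integral {0..x} h" for x
  have H_cont: "continuous_on {0..l} H"
    unfolding H_def[abs_def] by (intro continuous_intros g indefinite_integral_continuous_1 h_int)
  have H_eq: "H x = H y" if "0 < x" "x < y" "y < l" for x y
  proof -
    have "g y - g x = integral {x..y} h"
      using that by (intro weak_deriv_increment_interior[OF g h weak])
    then show ?thesis
      using integral_combine_eq_diff[OF h_int, of x y] that unfolding H_def by simp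
  qed
  have H_mid: "H x = H (l / 2)" if "x \<in> {0<..<l}" for x
  proof (cases x "l / 2" rule: linorder_cases)
    case less
    then show ?thesis using that by (intro H_eq) auto
  next
    case greater
    then show ?thesis using that by (intro H_eq[symmetric]) auto
  qed (simp only:)
  have H_const: "H x = H (l / 2)" if "x \<in> {0..l}" for x
  proof (rule continuous_constant_on_closure[of "{0<..<l}" H])
    show "continuous_on (closure {0<..<l}) H" using H_cont l by simp
    show "x \<in> closure {0<..<l}" using that l by simp
  qed (rule H_mid)
  have "H b = H a"
    using H_const[of a] H_const[of b] ab by simp
  then show ?thesis
    using integral_combine_eq_diff[OF h_int ab(1,2,3)] unfolding H_def by simp
qed simp

lemma set_integrable_if_square_integrable:
  fixes h :: "real \<Rightarrow> real"
  assumes "set_borel_measurable lborel {a..b} h" "set_integrable lborel {a..b} (\<lambda>t. (h t)\<^sup>2)"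
  shows "set_integrable lborel {a..b} h"
proof (rule set_integrable_bound[OF _ assms(1)])
  have "set_integrable lborel {a..b} (\<lambda>t. 1::real)"
    unfolding set_integrable_def by (rule borel_integrable_compact) auto
  then show "set_integrable lborel {a..b} (\<lambda>t. 1 + (h t)\<^sup>2)"
    using assms(2) unfolding set_integrable_def by (simp add: distrib_left)
  have "\<bar>y\<bar> \<le> 1 + y\<^sup>2" for y :: real
  proof (cases "\<bar>y\<bar> \<le> 1")
    case False
    then have "\<bar>y\<bar> * 1 \<le> \<bar>y\<bar> * \<bar>y\<bar>" by (intro mult_left_mono) auto
    then show ?thesis by (simp add: power2_eq_square)
  qed (simp add: add_increasing2)
  then show "AE x in lborel. x \<in> {a..b} \<longrightarrow> norm (h x) \<le> norm (1 + (h x)\<^sup>2)"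
    by simp
qed

lemma weak_deriv_L2_set_integrable: "weak_deriv_L2 l g h \<Longrightarrow> set_integrable lborel {0..l} h"
  unfolding weak_deriv_L2_def by (blast intro: set_integrable_if_square_integrable)

lemma weak_deriv_L2_absolutely_integrable:
  assumes "weak_deriv_L2 l g h"
  shows "h absolutely_integrable_on {0..l}"
proof -
  have h: "set_integrable lborel {0..l} h"
    using assms by (rule weak_deriv_L2_set_integrable)
  show ?thesis
    using set_borel_integral_eq_integral(1)[OF h] set_borel_integral_eq_integral(1)[OF set_integrable_abs[OF h]]
    by (rule abs_absolutely_integrableI_1)
qed

lemma weak_deriv_L2_square_integrable:
  assumes "weak_deriv_L2 l g h"
  shows "(\<lambda>t. (h t)\<^sup>2) integrable_on {0..l}"
    "(LINT t:{0..l}|lborel. (h t)\<^sup>2) = integral {0..l} (\<lambda>t. (h t)\<^sup>2)"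
proof -
  have "set_integrable lborel {0..l} (\<lambda>t. (h t)\<^sup>2)"
    using assms unfolding weak_deriv_L2_def by blast
  then show "(\<lambda>t. (h t)\<^sup>2) integrable_on {0..l}"
    "(LINT t:{0..l}|lborel. (h t)\<^sup>2) = integral {0..l} (\<lambda>t. (h t)\<^sup>2)"
    by (rule set_borel_integral_eq_integral)+
qed

lemma weak_deriv_L2_imp_weak_deriv_HK:
  fixes g h :: "real \<Rightarrow> real"
  assumes g: "continuous_on {0..l} g" and weak: "weak_deriv_L2 l g h"
  shows "weak_deriv_HK l g h"
  unfolding weak_deriv_HK_def
proof (intro allI impI)
  fix \<phi> assume \<phi>: "test_fun l \<phi>"
  have "smooth \<phi>"
    using \<phi> by (simp add: test_fun_iff_smooth)
  then have cont: "continuous_on S \<phi>" "continuous_on S (deriv \<phi>)" for S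
    by (simp_all add: smooth_imp_continuous_on smooth_deriv)
  have h: "set_integrable lborel {0..l} h"
    using weak by (rule weak_deriv_L2_set_integrable)
  have int1: "set_integrable lborel {0..l} (\<lambda>t. g t * deriv \<phi> t)"
    unfolding set_integrable_def by (rule borel_integrable_compact) (auto intro!: continuous_intros g cont)
  obtain K where K: "\<forall>x\<in>{0..l}. norm (\<phi> x) \<le> K"
    using compact_imp_bounded[OF compact_continuous_image[OF cont(1) compact_Icc], of 0 l]
    unfolding bounded_iff by auto
  have int2: "set_integrable lborel {0..l} (\<lambda>t. h t * \<phi> t)"
  proof (rule set_integrable_bound[where f = "\<lambda>t. K * h t"])
    show "set_integrable lborel {0..l} (\<lambda>t. K * h t)"
      using h by simp
    have "(\<lambda>x. indicator {0..l} x *\<^sub>R h x) \<in> borel_measurable lborel"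
      using h unfolding set_integrable_def by (rule borel_measurable_integrable)
    moreover have "\<phi> \<in> borel_measurable lborel"
      using borel_measurable_continuous_onI[OF cont(1)] by simp
    ultimately have "(\<lambda>x. (indicator {0..l} x *\<^sub>R h x) * \<phi> x) \<in> borel_measurable lborel"
      by (rule borel_measurable_times)
    then show "set_borel_measurable lborel {0..l} (\<lambda>t. h t * \<phi> t)"
      unfolding set_borel_measurable_def by (simp add: mult.assoc)
    show "AE x in lborel. x \<in> {0..l} \<longrightarrow> norm (h x * \<phi> x) \<le> norm (K * h x)"
    proof (rule AE_I2, rule impI)
      fix x assume "x \<in> {0..l}"
      then have "\<bar>\<phi> x\<bar> \<le> \<bar>K\<bar>" using K by force
      then have "\<bar>h x\<bar> * \<bar>\<phi> x\<bar> \<le> \<bar>h x\<bar> * \<bar>K\<bar>" by (intro mult_left_mono) auto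
      then show "norm (h x * \<phi> x) \<le> norm (K * h x)" by (simp add: abs_mult mult.commute)
    qed
  qed
  show "integral {0..l} (\<lambda>t. g t * deriv \<phi> t) = - integral {0..l} (\<lambda>t. h t * \<phi> t)"
    using weak \<phi> set_borel_integral_eq_integral(2)[OF int1] set_borel_integral_eq_integral(2)[OF int2]
    unfolding weak_deriv_L2_def by metis
qed

lemma weak_deriv_L2_increment:
  fixes g h :: "real \<Rightarrow> real"
  assumes "continuous_on {0..l} g" "weak_deriv_L2 l g h" "0 \<le> a" "a \<le> b" "b \<le> l"
  shows "g b - g a = integral {a..b} h"
  using assms weak_deriv_L2_absolutely_integrable weak_deriv_L2_imp_weak_deriv_HK
  by (intro weak_deriv_increment) auto

section \<open>A weighted Wirtinger inequality\<close>

lemma riccati_weighted_inequality: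
  fixes G G' W :: "real \<Rightarrow> real"
  assumes "a \<le> b"
    and G: "\<And>t. t \<in> {a..b} \<Longrightarrow> (G has_real_derivative G' t) (at t)" "continuous_on {a..b} G'"
    and W: "\<And>t. t \<in> {a..b} \<Longrightarrow> (W has_real_derivative - (\<omega>\<^sup>2 + (W t)\<^sup>2)) (at t)"
  shows "W b * (G b)\<^sup>2 - W a * (G a)\<^sup>2 + \<omega>\<^sup>2 * integral {a..b} (\<lambda>t. (G t)\<^sup>2)
    \<le> integral {a..b} (\<lambda>t. (G' t)\<^sup>2)"
proof -
  define \<Phi>' where "\<Phi>' t = - (\<omega>\<^sup>2 + (W t)\<^sup>2) * (G t)\<^sup>2 + W t * (2 * G t * G' t)" for t
  have cont: "continuous_on {a..b} G" "continuous_on {a..b} W"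
    using G(1) W by (meson DERIV_isCont continuous_at_imp_continuous_on)+
  have "((\<lambda>t. W t * (G t)\<^sup>2) has_real_derivative \<Phi>' t) (at t)" if "t \<in> {a..b}" for t
    using W[OF that] G(1)[OF that] unfolding \<Phi>'_def by (auto intro!: derivative_eq_intros)
  then have \<Phi>': "(\<Phi>' has_integral (W b * (G b)\<^sup>2 - W a * (G a)\<^sup>2)) {a..b}"
    using assms(1) by (intro fundamental_theorem_of_calculus)
      (auto simp: has_real_derivative_iff_has_vector_derivative[symmetric] intro: DERIV_subset)
  have "((\<lambda>t. (G' t)\<^sup>2 - \<Phi>' t - \<omega>\<^sup>2 * (G t)\<^sup>2) has_integral
      integral {a..b} (\<lambda>t. (G' t)\<^sup>2) - (W b * (G b)\<^sup>2 - W a * (G a)\<^sup>2)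
        - \<omega>\<^sup>2 * integral {a..b} (\<lambda>t. (G t)\<^sup>2)) {a..b}"
    by (intro has_integral_diff has_integral_mult_right \<Phi>' integrable_integral
        integrable_continuous_interval continuous_intros cont G(2))
  moreover have "(G' t)\<^sup>2 - \<Phi>' t - \<omega>\<^sup>2 * (G t)\<^sup>2 = (G' t - W t * G t)\<^sup>2" for t
    unfolding \<Phi>'_def by (simp add: power2_eq_square algebra_simps)
  ultimately have "0 \<le> integral {a..b} (\<lambda>t. (G' t)\<^sup>2) - (W b * (G b)\<^sup>2 - W a * (G a)\<^sup>2)
      - \<omega>\<^sup>2 * integral {a..b} (\<lambda>t. (G t)\<^sup>2)"
    by (metis (no_types, lifting) has_integral_nonneg zero_le_power2)
  then show ?thesis by simp
qed

lemma cot_weight_riccati: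
  assumes "sin (\<omega> * (t + \<delta>)) \<noteq> 0"
  shows "((\<lambda>t. \<omega> * cot (\<omega> * (t + \<delta>))) has_real_derivative
    - (\<omega>\<^sup>2 + (\<omega> * cot (\<omega> * (t + \<delta>)))\<^sup>2)) (at t)"
proof -
  have "((\<lambda>t. \<omega> * cot (\<omega> * (t + \<delta>))) has_real_derivative
      \<omega> * (- inverse ((sin (\<omega> * (t + \<delta>)))\<^sup>2) * (\<omega> * 1))) (at t)"
    using assms by (auto intro!: derivative_eq_intros DERIV_cot[THEN DERIV_chain2])
  moreover have "\<omega> * (- inverse ((sin x)\<^sup>2) * (\<omega> * 1)) = - (\<omega>\<^sup>2 + (\<omega> * cot x)\<^sup>2)"
    if "sin x \<noteq> 0" for x
    using that
    by (simp add: cot_def power_divide power_mult_distrib cos_squared_eq field_simps)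
      (simp add: power2_eq_square)
  ultimately show ?thesis
    using assms by simp
qed

lemma square_integral_le:
  fixes h :: "real \<Rightarrow> real"
  assumes "a \<le> b" "h integrable_on {a..b}" "(\<lambda>t. (h t)\<^sup>2) integrable_on {a..b}"
  shows "(integral {a..b} h)\<^sup>2 \<le> (b - a) * integral {a..b} (\<lambda>t. (h t)\<^sup>2)"
proof (cases "a = b")
  case False
  define I where "I = integral {a..b} h"
  define m where "m = I / (b - a)"
  have "((\<lambda>t. (h t - m)\<^sup>2) has_integral integral {a..b} (\<lambda>t. (h t)\<^sup>2) - 2 * m * I + m\<^sup>2 * (b - a)) {a..b}"
  proof -
    have "((\<lambda>t. (h t)\<^sup>2 - 2 * m * h t + m\<^sup>2) has_integral
        integral {a..b} (\<lambda>t. (h t)\<^sup>2) - 2 * m * I + m\<^sup>2 * (b - a)) {a..b}"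
      using assms has_integral_const_real[of "m\<^sup>2" a b] unfolding I_def
      by (intro has_integral_add has_integral_diff has_integral_mult_right integrable_integral)
        (auto simp: mult.commute)
    then show ?thesis by (simp add: power2_eq_square algebra_simps)
  qed
  then have "0 \<le> integral {a..b} (\<lambda>t. (h t)\<^sup>2) - 2 * m * I + m\<^sup>2 * (b - a)"
    by (rule has_integral_nonneg) simp
  moreover have "2 * (I / d) * I - (I / d)\<^sup>2 * d = I\<^sup>2 / d" if "d \<noteq> 0" for d
    using that by (simp add: field_simps power2_eq_square)
  then have "2 * m * I - m\<^sup>2 * (b - a) = I\<^sup>2 / (b - a)"
    using False unfolding m_def by simp
  ultimately have "I\<^sup>2 / (b - a) \<le> integral {a..b} (\<lambda>t. (h t)\<^sup>2)"
    by linarith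
  then show ?thesis
    using assms(1) False unfolding I_def by (simp add: divide_le_eq mult.commute)
qed simp

lemma square_diff_le:
  fixes x y \<eta> K :: real
  assumes "\<bar>x - y\<bar> \<le> 2 * \<eta>" "\<bar>x\<bar> \<le> K" "0 \<le> \<eta>" "\<eta> \<le> 1"
  shows "x\<^sup>2 - y\<^sup>2 \<le> 4 * \<eta> * (K + 1)"
proof -
  have "x\<^sup>2 - y\<^sup>2 = (x - y) * (x + y)"
    by (simp add: power2_eq_square algebra_simps)
  also have "\<dots> \<le> \<bar>x - y\<bar> * \<bar>x + y\<bar>"
    by (metis abs_ge_self abs_mult)
  also have "\<dots> \<le> (2 * \<eta>) * (2 * K + 2 * \<eta>)"
    using assms by (intro mult_mono) auto
  also have "\<dots> \<le> 4 * \<eta> * (K + 1)"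
    using mult_left_mono[OF assms(4,3)] by (simp add: algebra_simps)
  finally show ?thesis .
qed

lemma affine_interpolant_close:
  fixes g :: "real \<Rightarrow> real"
  assumes "a < b" "t \<in> {a..b}" and osc: "\<And>s t. s \<in> {a..b} \<Longrightarrow> t \<in> {a..b} \<Longrightarrow> \<bar>g s - g t\<bar> \<le> \<eta>"
  shows "\<bar>g t - (g a + (g b - g a) / (b - a) * (t - a))\<bar> \<le> 2 * \<eta>"
proof -
  have "\<bar>(g b - g a) / (b - a) * (t - a)\<bar> = \<bar>g b - g a\<bar> * ((t - a) / (b - a))"
    using assms(1,2) by (simp add: abs_mult)
  also have "\<dots> \<le> \<bar>g b - g a\<bar> * 1"
    using assms(1,2) by (intro mult_left_mono) auto
  finally have "\<bar>(g b - g a) / (b - a) * (t - a)\<bar> \<le> \<bar>g b - g a\<bar>"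
    by simp
  moreover have "\<bar>g b - g a\<bar> \<le> \<eta>" "\<bar>g a - g t\<bar> \<le> \<eta>"
    using osc[of b a] osc[of a t] assms(1,2) by auto
  moreover have "\<bar>g t - (g a + q)\<bar> \<le> 2 * \<eta>" if "\<bar>q\<bar> \<le> \<eta>" "\<bar>g a - g t\<bar> \<le> \<eta>" for q
    using that by arith
  ultimately show ?thesis
    by force
qed

lemma riccati_weighted_inequality_piece:
  fixes g h W :: "real \<Rightarrow> real"
  assumes ab: "a < b"
    and W: "\<And>t. t \<in> {a..b} \<Longrightarrow> (W has_real_derivative - (\<omega>\<^sup>2 + (W t)\<^sup>2)) (at t)"
    and h: "h integrable_on {a..b}" "(\<lambda>t. (h t)\<^sup>2) integrable_on {a..b}"
    and g: "continuous_on {a..b} g" "g b - g a = integral {a..b} h"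
    and osc: "\<And>s t. s \<in> {a..b} \<Longrightarrow> t \<in> {a..b} \<Longrightarrow> \<bar>g s - g t\<bar> \<le> \<eta>" "\<eta> \<le> 1"
    and bound: "\<And>t. t \<in> {a..b} \<Longrightarrow> \<bar>g t\<bar> \<le> K"
  shows "W b * (g b)\<^sup>2 - W a * (g a)\<^sup>2 + \<omega>\<^sup>2 * integral {a..b} (\<lambda>t. (g t)\<^sup>2)
      - integral {a..b} (\<lambda>t. (h t)\<^sup>2) \<le> \<omega>\<^sup>2 * (b - a) * (4 * \<eta> * (K + 1))"
proof -
  define s where "s = (g b - g a) / (b - a)"
  define G where "G t = g a + s * (t - a)" for t
  have G_ends: "G a = g a" "G b = g b"
    using ab by (simp_all add: G_def s_def)
  have "W b * (G b)\<^sup>2 - W a * (G a)\<^sup>2 + \<omega>\<^sup>2 * integral {a..b} (\<lambda>t. (G t)\<^sup>2) \<le> integral {a..b} (\<lambda>t. s\<^sup>2)"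
    using ab W unfolding G_def by (intro riccati_weighted_inequality) (auto intro!: derivative_eq_intros)
  also have "integral {a..b} (\<lambda>t. s\<^sup>2) \<le> integral {a..b} (\<lambda>t. (h t)\<^sup>2)"
  proof -
    have "(s * (b - a))\<^sup>2 \<le> (b - a) * integral {a..b} (\<lambda>t. (h t)\<^sup>2)"
      using ab g(2) square_integral_le[OF _ h] unfolding s_def by simp
    then show ?thesis
      using ab by (simp add: power_mult_distrib power2_eq_square mult.commute)
  qed
  finally have Riccati: "W b * (g b)\<^sup>2 - W a * (g a)\<^sup>2 + \<omega>\<^sup>2 * integral {a..b} (\<lambda>t. (G t)\<^sup>2)
      \<le> integral {a..b} (\<lambda>t. (h t)\<^sup>2)"
    by (simp only: G_ends)
  have close: "\<bar>g t - G t\<bar> \<le> 2 * \<eta>" if "t \<in> {a..b}" for t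
    unfolding G_def s_def using ab that osc(1) by (rule affine_interpolant_close)
  have "0 \<le> \<eta>"
    using osc(1)[of a a] ab by auto
  then have "(g t)\<^sup>2 - 4 * \<eta> * (K + 1) \<le> (G t)\<^sup>2" if "t \<in> {a..b}" for t
    using square_diff_le[OF close bound] that osc(2) by fastforce
  then have "integral {a..b} (\<lambda>t. (g t)\<^sup>2) - integral {a..b} (\<lambda>t. 4 * \<eta> * (K + 1))
      \<le> integral {a..b} (\<lambda>t. (G t)\<^sup>2)"
    unfolding G_def
    by (subst integral_diff[symmetric])
      (auto intro!: integral_le integrable_continuous_interval continuous_intros g(1))
  then have "integral {a..b} (\<lambda>t. (g t)\<^sup>2) - (b - a) * (4 * \<eta> * (K + 1))
      \<le> integral {a..b} (\<lambda>t. (G t)\<^sup>2)"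
    using ab by (simp add: algebra_simps)
  then have "\<omega>\<^sup>2 * (integral {a..b} (\<lambda>t. (g t)\<^sup>2) - (b - a) * (4 * \<eta> * (K + 1)))
      \<le> \<omega>\<^sup>2 * integral {a..b} (\<lambda>t. (G t)\<^sup>2)"
    by (rule mult_left_mono) simp
  then have "\<omega>\<^sup>2 * integral {a..b} (\<lambda>t. (g t)\<^sup>2) - \<omega>\<^sup>2 * (b - a) * (4 * \<eta> * (K + 1))
      \<le> \<omega>\<^sup>2 * integral {a..b} (\<lambda>t. (G t)\<^sup>2)"
    by (simp add: right_diff_distrib left_diff_distrib mult.assoc)
  with Riccati show ?thesis
    by linarith
qed

lemma increment_le_if_local_increment_le:
  fixes P :: "real \<Rightarrow> real"
  assumes "0 < d" "0 \<le> l"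
    and local: "\<And>s t. 0 \<le> s \<Longrightarrow> s < t \<Longrightarrow> t \<le> l \<Longrightarrow> t - s < d \<Longrightarrow> P t - P s \<le> c * (t - s)"
  shows "P l - P 0 \<le> c * l"
proof (cases "l = 0")
  case False
  then have l: "0 < l" using assms(2) by simp
  obtain N :: nat where N: "l / d < N"
    using reals_Archimedean2 by blast
  then have N0: "0 < N"
    using l assms(1) by (metis divide_pos_pos of_nat_0_less_iff order.strict_trans)
  define t where "t k = real k * l / real N" for k :: nat
  have step: "t (Suc k) - t k = l / N" for k
    unfolding t_def by (simp add: distrib_right add_divide_distrib)
  have "P (t k) - P 0 \<le> c * t k" if "k \<le> N" for k
    using that
  proof (induction k)
    case (Suc k)
    have "P (t (Suc k)) - P (t k) \<le> c * (t (Suc k) - t k)"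
    proof (rule local)
      show "0 \<le> t k"
        using l by (simp add: t_def)
      have "0 < l / N"
        using l N0 by simp
      then show "t k < t (Suc k)"
        using step[of k] by linarith
      have "real (Suc k) * l \<le> real N * l"
        using Suc.prems l by (intro mult_right_mono) auto
      then show "t (Suc k) \<le> l"
        using N0 by (simp add: t_def pos_divide_le_eq mult.commute)
      show "t (Suc k) - t k < d"
        using N assms(1) N0 by (simp add: step field_simps)
    qed
    with Suc show ?case
      by (simp add: algebra_simps)
  qed (simp add: t_def)
  from this[of N] show ?thesis
    using N0 by (simp add: t_def)
qed simp

lemma riccati_weighted_inequality_increments:
  fixes g h W :: "real \<Rightarrow> real"
  assumes l: "0 \<le> l"
    and W: "\<And>t. t \<in> {0..l} \<Longrightarrow> (W has_real_derivative - (\<omega>\<^sup>2 + (W t)\<^sup>2)) (at t)"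
    and h: "h integrable_on {0..l}" "(\<lambda>t. (h t)\<^sup>2) integrable_on {0..l}"
    and g: "continuous_on {0..l} g"
    and increment: "\<And>a b. 0 \<le> a \<Longrightarrow> a \<le> b \<Longrightarrow> b \<le> l \<Longrightarrow> g b - g a = integral {a..b} h"
  shows "W l * (g l)\<^sup>2 - W 0 * (g 0)\<^sup>2 + \<omega>\<^sup>2 * integral {0..l} (\<lambda>t. (g t)\<^sup>2)
    \<le> integral {0..l} (\<lambda>t. (h t)\<^sup>2)"
proof -
  define P where "P t = W t * (g t)\<^sup>2 + \<omega>\<^sup>2 * integral {0..t} (\<lambda>s. (g s)\<^sup>2) - integral {0..t} (\<lambda>s. (h s)\<^sup>2)"
    for t
  obtain K where K: "\<forall>t\<in>{0..l}. \<bar>g t\<bar> \<le> K"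
    using compact_imp_bounded[OF compact_continuous_image[OF g compact_Icc]]
    unfolding bounded_iff by auto
  have g2: "(\<lambda>t. (g t)\<^sup>2) integrable_on {0..l}"
    by (intro integrable_continuous_interval continuous_intros g)
  have local: "P l - P 0 \<le> \<omega>\<^sup>2 * (4 * \<eta> * (K + 1)) * l" if \<eta>: "0 < \<eta>" "\<eta> \<le> 1" for \<eta>
  proof -
    obtain d where d: "0 < d" "\<forall>x\<in>{0..l}. \<forall>y\<in>{0..l}. dist y x < d \<longrightarrow> dist (g y) (g x) < \<eta>"
      using compact_uniformly_continuous[OF g compact_Icc] \<eta>(1)
      unfolding uniformly_continuous_on_def by blast
    show ?thesis
    proof (rule increment_le_if_local_increment_le[OF d(1) l])
      fix s t assume st: "0 \<le> s" "s < t" "t \<le> l" "t - s < d"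
      have "P t - P s = W t * (g t)\<^sup>2 - W s * (g s)\<^sup>2 + \<omega>\<^sup>2 * integral {s..t} (\<lambda>t. (g t)\<^sup>2)
          - integral {s..t} (\<lambda>t. (h t)\<^sup>2)"
        unfolding integral_combine_eq_diff[OF g2 st(1) less_imp_le[OF st(2)] st(3)]
          integral_combine_eq_diff[OF h(2) st(1) less_imp_le[OF st(2)] st(3)]
        by (simp add: P_def algebra_simps)
      also have "\<dots> \<le> \<omega>\<^sup>2 * (t - s) * (4 * \<eta> * (K + 1))"
      proof (rule riccati_weighted_inequality_piece)
        show "\<bar>g x - g y\<bar> \<le> \<eta>" if "x \<in> {s..t}" "y \<in> {s..t}" for x y
        proof -
          have "x \<in> {0..l}" "y \<in> {0..l}" "dist x y < d"
            using that st by (auto simp: dist_real_def)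
          then show ?thesis
            using d(2) by (fastforce simp: dist_real_def)
        qed
      qed (use st W h g increment K \<eta> in \<open>auto intro: integrable_on_subinterval continuous_on_subset\<close>)
      finally show "P t - P s \<le> \<omega>\<^sup>2 * (4 * \<eta> * (K + 1)) * (t - s)"
        by (simp add: mult_ac)
    qed
  qed
  have "P l - P 0 \<le> (\<omega>\<^sup>2 * (4 * (K + 1)) * l) * \<eta>" if "0 < \<eta>" "\<eta> \<le> 1" for \<eta>
    using local[OF that] by (simp add: mult_ac)
  then have "P l - P 0 \<le> 0"
    by (rule nonpos_if_le_multiples_of_small)
  then show ?thesis
    by (simp add: P_def)
qed

lemma cot_le_inverse:
  fixes x :: real
  assumes "0 < x" "x < pi"
  shows "cot x \<le> 1 / x"
proof -
  have "(\<lambda>t. sin t - t * cos t) 0 \<le> (\<lambda>t. sin t - t * cos t) x"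
  proof (rule DERIV_nonneg_imp_nondecreasing[of 0 x])
    fix t :: real assume t: "0 \<le> t" "t \<le> x"
    have "((\<lambda>t. sin t - t * cos t) has_real_derivative t * sin t) (at t)"
      by (auto intro!: derivative_eq_intros)
    moreover have "0 \<le> t * sin t"
      using t assms by (simp add: sin_ge_zero)
    ultimately show "\<exists>y. ((\<lambda>t. sin t - t * cos t) has_real_derivative y) (at t) \<and> y \<ge> 0"
      by blast
  qed (use assms in simp)
  moreover have "0 < sin x"
    using assms by (simp add: sin_gt_zero)
  ultimately show ?thesis
    using assms by (simp add: cot_def divide_simps mult.commute)
qed

lemma cot_boundary_weight_le:
  assumes "0 < \<epsilon>" "\<epsilon> < 1"
  shows "(1 - \<epsilon>) * pi * cot (pi * \<epsilon> / 2) \<le> 2 / \<epsilon>"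
proof -
  have "0 \<le> cot (pi * \<epsilon> / 2)" "cot (pi * \<epsilon> / 2) \<le> 2 / (pi * \<epsilon>)"
    using assms cot_le_inverse[of "pi * \<epsilon> / 2"]
    by (auto intro!: less_imp_le[OF cot_gt_zero] simp: field_simps)
  then have "(1 - \<epsilon>) * pi * cot (pi * \<epsilon> / 2) \<le> pi * (2 / (pi * \<epsilon>))"
    using assms by (intro mult_mono) auto
  then show ?thesis
    by simp
qed

lemma cot_weighted_inequality:
  fixes g h :: "real \<Rightarrow> real"
  assumes l: "0 \<le> l" and \<omega>\<delta>: "0 < \<omega>" "0 < \<delta>" "\<omega> * (l + \<delta>) < pi"
    and h: "h integrable_on {0..l}" "(\<lambda>t. (h t)\<^sup>2) integrable_on {0..l}"
    and g: "continuous_on {0..l} g"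
    and increment: "\<And>a b. 0 \<le> a \<Longrightarrow> a \<le> b \<Longrightarrow> b \<le> l \<Longrightarrow> g b - g a = integral {a..b} h"
  shows "\<omega> * cot (\<omega> * (l + \<delta>)) * (g l)\<^sup>2 - \<omega> * cot (\<omega> * \<delta>) * (g 0)\<^sup>2
    + \<omega>\<^sup>2 * integral {0..l} (\<lambda>t. (g t)\<^sup>2) \<le> integral {0..l} (\<lambda>t. (h t)\<^sup>2)"
proof -
  have "sin (\<omega> * (t + \<delta>)) \<noteq> 0" if "t \<in> {0..l}" for t
  proof -
    have "\<omega> * (t + \<delta>) \<le> \<omega> * (l + \<delta>)"
      using that \<omega>\<delta> by (intro mult_left_mono) auto
    then have "0 < sin (\<omega> * (t + \<delta>))"
      using that \<omega>\<delta> by (intro sin_gt_zero) (simp, linarith)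
    then show ?thesis
      by simp
  qed
  then have "\<omega> * cot (\<omega> * (l + \<delta>)) * (g l)\<^sup>2 - \<omega> * cot (\<omega> * (0 + \<delta>)) * (g 0)\<^sup>2
      + \<omega>\<^sup>2 * integral {0..l} (\<lambda>t. (g t)\<^sup>2) \<le> integral {0..l} (\<lambda>t. (h t)\<^sup>2)"
    by (intro riccati_weighted_inequality_increments[OF l _ h g increment] cot_weight_riccati) auto
  then show ?thesis
    by simp
qed

lemma wirtinger_inequality_with_boundary:
  fixes g h :: "real \<Rightarrow> real"
  assumes l: "0 \<le> l" and \<epsilon>: "0 < \<epsilon>" "\<epsilon> < 1"
    and h: "h integrable_on {0..l}" "(\<lambda>t. (h t)\<^sup>2) integrable_on {0..l}"
    and g: "continuous_on {0..l} g"
    and increment: "\<And>a b. 0 \<le> a \<Longrightarrow> a \<le> b \<Longrightarrow> b \<le> l \<Longrightarrow> g b - g a = integral {a..b} h"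
  shows "(1 - \<epsilon>)\<^sup>2 * pi\<^sup>2 * integral {0..l} (\<lambda>t. (g t)\<^sup>2) - 2 / \<epsilon> * l * ((g 0)\<^sup>2 + (g l)\<^sup>2)
    \<le> l\<^sup>2 * integral {0..l} (\<lambda>t. (h t)\<^sup>2)"
proof (cases "l = 0")
  case False
  then have "0 < l" using l by simp
  define \<omega> where "\<omega> = (1 - \<epsilon>) * pi / l"
  define \<delta> where "\<delta> = l * \<epsilon> / (2 * (1 - \<epsilon>))"
  define c where "c = cot (pi * \<epsilon> / 2)"
  have \<omega>l: "l * \<omega> = (1 - \<epsilon>) * pi" and \<omega>\<delta>: "\<omega> * \<delta> = pi * \<epsilon> / 2"
    using \<open>0 < l\<close> \<epsilon> unfolding \<omega>_def \<delta>_def by (auto simp: field_simps)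
  have \<omega>l\<delta>: "\<omega> * (l + \<delta>) = pi - pi * \<epsilon> / 2"
    using \<omega>l \<omega>\<delta> by (simp add: algebra_simps)
  have "0 < \<omega>" "0 < \<delta>" "\<omega> * (l + \<delta>) < pi"
    using \<open>0 < l\<close> \<epsilon> unfolding \<omega>l\<delta> unfolding \<omega>_def \<delta>_def by auto
  note weighted = cot_weighted_inequality[OF l this h g increment]
  have "cot (\<omega> * \<delta>) = c" "cot (\<omega> * (l + \<delta>)) = - c"
    unfolding \<omega>l\<delta> \<omega>\<delta> c_def by (simp_all add: cot_def sin_pi_minus cos_pi_minus)
  with weighted have "\<omega>\<^sup>2 * integral {0..l} (\<lambda>t. (g t)\<^sup>2) - \<omega> * c * ((g 0)\<^sup>2 + (g l)\<^sup>2)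
      \<le> integral {0..l} (\<lambda>t. (h t)\<^sup>2)"
    by (simp add: algebra_simps)
  from mult_left_mono[OF this, of "l\<^sup>2"]
  have "(l * \<omega>)\<^sup>2 * integral {0..l} (\<lambda>t. (g t)\<^sup>2) - l * ((l * \<omega>) * c) * ((g 0)\<^sup>2 + (g l)\<^sup>2)
      \<le> l\<^sup>2 * integral {0..l} (\<lambda>t. (h t)\<^sup>2)"
    by (simp add: power2_eq_square algebra_simps)
  moreover have "l * ((1 - \<epsilon>) * pi * c) * ((g 0)\<^sup>2 + (g l)\<^sup>2) \<le> l * (2 / \<epsilon>) * ((g 0)\<^sup>2 + (g l)\<^sup>2)"
    using l cot_boundary_weight_le[OF \<epsilon>] unfolding c_def by (intro mult_right_mono mult_left_mono) auto
  ultimately show ?thesis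
    unfolding \<omega>l by (simp add: power_mult_distrib)
qed simp

lemma H1_wirtinger_inequality_with_boundary:
  fixes g h :: "real \<Rightarrow> real"
  assumes "0 \<le> l" "0 < \<epsilon>" "\<epsilon> < 1" "H1_on l g" "weak_deriv_L2 l g h"
  shows "l\<^sup>2 * (LINT t:{0..l}|lborel. (h t)\<^sup>2)
    \<ge> (1 - \<epsilon>)\<^sup>2 * pi\<^sup>2 * (LINT t:{0..l}|lborel. (g t)\<^sup>2) - 2 / \<epsilon> * l * ((g 0)\<^sup>2 + (g l)\<^sup>2)"
proof -
  have g: "continuous_on {0..l} g" and g2: "set_integrable lborel {0..l} (\<lambda>t. (g t)\<^sup>2)"
    using assms(4) unfolding H1_on_def by auto
  have "h integrable_on {0..l}"
    using weak_deriv_L2_absolutely_integrable[OF assms(5)] by (simp add: absolutely_integrable_on_def)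
  then show ?thesis
    using wirtinger_inequality_with_boundary[OF assms(1-3) _ weak_deriv_L2_square_integrable(1)[OF assms(5)] g
        weak_deriv_L2_increment[OF g assms(5)]]
    by (simp add: weak_deriv_L2_square_integrable(2)[OF assms(5)] set_borel_integral_eq_integral(2)[OF g2])
qed

section \<open>Facet normals and edges\<close>

lemma unit_hyperplane_eq:
  fixes u v :: "'a::euclidean_space"
  assumes "norm u = 1" "norm v = 1" "{x. u \<bullet> x = b} = {x. v \<bullet> x = c}"
  shows "v = u \<and> c = b \<or> v = - u \<and> c = - b"
proof -
  have "u \<noteq> 0" using assms(1) by auto
  then obtain x0 where x0: "u \<bullet> x0 = b" by (rule hyperplane_eq_Ex)
  have vx0: "v \<bullet> x0 = c" using assms(3) x0 by blast
  define y where "y = v - (u \<bullet> v) *\<^sub>R u"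
  have uu: "u \<bullet> u = 1" and vv: "v \<bullet> v = 1"
    using assms(1,2) by (simp_all add: dot_square_norm)
  have uy: "u \<bullet> y = 0"
    unfolding y_def by (simp add: inner_diff_right uu)
  then have "u \<bullet> (x0 + y) = b"
    using x0 by (simp add: inner_add_right)
  then have "v \<bullet> (x0 + y) = c"
    using assms(3) by blast
  then have "v \<bullet> y = 0"
    using vx0 by (simp add: inner_add_right)
  then have "y \<bullet> y = 0"
    using uy unfolding y_def by (simp add: inner_diff_left)
  then have v: "v = (u \<bullet> v) *\<^sub>R u"
    unfolding y_def by simp
  have "v \<bullet> v = (u \<bullet> v)\<^sup>2 * (u \<bullet> u)"
    by (subst (1 2) v) (simp add: power2_eq_square)
  then have "u \<bullet> v = 1 \<or> u \<bullet> v = -1"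
    using uu vv by (simp add: power2_eq_1_iff)
  then show ?thesis
  proof
    assume "u \<bullet> v = 1"
    then show ?thesis using v x0 vx0 by simp
  next
    assume "u \<bullet> v = -1"
    then show ?thesis using v x0 vx0 by simp
  qed
qed

lemma facet_affine_hull_eq_hyperplane:
  fixes M F :: "'a::euclidean_space set"
  assumes "interior M \<noteq> {}" "F facet_of M" "v \<noteq> 0" "F = M \<inter> {x. v \<bullet> x = c}"
  shows "affine hull F = {x. v \<bullet> x = c}"
proof (rule affine_dim_equal)
  show "affine hull F \<noteq> {}"
    using assms(2) by (simp add: facet_of_def)
  show "affine hull F \<subseteq> {x. v \<bullet> x = c}"
    using assms(4) by (intro hull_minimal) (auto simp: affine_hyperplane)
  show "aff_dim (affine hull F) = aff_dim {x. v \<bullet> x = c}"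
    using assms(2,3) aff_dim_nonempty_interior[OF assms(1)] by (simp add: facet_of_def)
qed (auto simp: affine_hyperplane)

definition facet_unit_normal :: "'a::euclidean_space set \<Rightarrow> 'a set \<Rightarrow> 'a \<Rightarrow> bool" where
  "facet_unit_normal M F u \<longleftrightarrow>
     norm u = 1 \<and> (\<exists>b. (\<forall>x\<in>M. u \<bullet> x \<le> b) \<and> F = M \<inter> {x. u \<bullet> x = b})"

lemma facet_unit_normal_exists:
  fixes M F :: "'a::euclidean_space set"
  assumes "polyhedron M" "F facet_of M"
  shows "\<exists>u. facet_unit_normal M F u"
proof -
  obtain a b where ab: "a \<noteq> 0" "M \<subseteq> {x. a \<bullet> x \<le> b}" "F = M \<inter> {x. a \<bullet> x = b}"
    using facet_of_polyhedron[OF assms] by blast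
  then have "norm (a /\<^sub>R norm a) = 1" "\<forall>x\<in>M. (a /\<^sub>R norm a) \<bullet> x \<le> b / norm a"
    "F = M \<inter> {x. (a /\<^sub>R norm a) \<bullet> x = b / norm a}"
    by (auto simp: divide_right_mono field_simps)
  then show ?thesis
    unfolding facet_unit_normal_def by blast
qed

lemma facet_unit_normal_unique:
  fixes M F :: "'a::euclidean_space set"
  assumes M: "interior M \<noteq> {}" and F: "F facet_of M"
    and "facet_unit_normal M F u" "facet_unit_normal M F v"
  shows "v = u"
proof -
  obtain d where d: "norm u = 1" "\<forall>x\<in>M. u \<bullet> x \<le> d" "F = M \<inter> {x. u \<bullet> x = d}"
    using assms(3) unfolding facet_unit_normal_def by blast
  obtain c where c: "norm v = 1" "\<forall>x\<in>M. v \<bullet> x \<le> c" "F = M \<inter> {x. v \<bullet> x = c}"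
    using assms(4) unfolding facet_unit_normal_def by blast
  have "v \<noteq> 0" "u \<noteq> 0"
    using c(1) d(1) by auto
  then have "{x. u \<bullet> x = d} = {x. v \<bullet> x = c}"
    using facet_affine_hull_eq_hyperplane[OF M F \<open>v \<noteq> 0\<close> c(3)]
      facet_affine_hull_eq_hyperplane[OF M F \<open>u \<noteq> 0\<close> d(3)] by metis
  from unit_hyperplane_eq[OF d(1) c(1) this] consider "v = u" | "v = - u" "c = - d"
    by blast
  then show ?thesis
  proof cases
    case 2
    have "u \<bullet> x = d" if "x \<in> M" for x
    proof -
      have "u \<bullet> x \<le> d" "- (u \<bullet> x) \<le> - d"
        using c(2) d(2) that 2 by auto
      then show ?thesis by linarith
    qed
    then have "interior M \<subseteq> interior {x. u \<bullet> x = d}"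
      by (intro interior_mono) auto
    also have "\<dots> = {}"
      using \<open>u \<noteq> 0\<close> by simp
    finally show ?thesis
      using M by simp
  qed
qed

lemma norm_outer_normal:
  fixes M F :: "'a::euclidean_space set"
  assumes "polyhedron M" "interior M \<noteq> {}" "F facet_of M"
  shows "norm (outer_normal M F) = 1"
proof -
  have "\<exists>!u. facet_unit_normal M F u"
    using facet_unit_normal_exists[OF assms(1,3)] facet_unit_normal_unique[OF assms(2,3)] by blast
  then have "facet_unit_normal M F (outer_normal M F)"
    unfolding outer_normal_def facet_unit_normal_def[symmetric] by (rule theI')
  then show ?thesis
    unfolding facet_unit_normal_def by blast
qed

lemma arc_len_nonneg:
  fixes u v :: "'a::euclidean_space"
  assumes "norm u = 1" "norm v = 1"
  shows "0 \<le> arc_len u v"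
  using Cauchy_Schwarz_ineq2[of u v] assms unfolding arc_len_def by (intro arccos_lbound) auto

lemma arc_path_0: "arc_path u v 0 = u"
  by (simp add: arc_path_def)

lemma arc_path_arc_len:
  fixes u v :: "'a::euclidean_space"
  assumes "norm u = 1" "norm v = 1"
  shows "arc_path u v (arc_len u v) = v"
proof -
  define c where "c = u \<bullet> v"
  have "\<bar>c\<bar> \<le> 1"
    unfolding c_def using Cauchy_Schwarz_ineq2[of u v] assms by simp
  have "u \<bullet> u = 1" "v \<bullet> v = 1"
    using assms by (simp_all add: dot_square_norm)
  then have "(norm (v - c *\<^sub>R u))\<^sup>2 = 1 - c\<^sup>2"
    unfolding power2_norm_eq_inner c_def
    by (simp add: inner_diff_left inner_diff_right inner_commute power2_eq_square)
  then have sqrt: "sqrt (1 - c\<^sup>2) = norm (v - c *\<^sub>R u)"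
    by (metis norm_ge_zero real_sqrt_abs abs_of_nonneg)
  show ?thesis
  proof (cases "norm (v - c *\<^sub>R u) = 0")
    case True
    then show ?thesis
      using \<open>\<bar>c\<bar> \<le> 1\<close> unfolding arc_path_def arc_len_def c_def[symmetric] by (simp add: cos_arccos_abs)
  next
    case False
    then show ?thesis
      using \<open>\<bar>c\<bar> \<le> 1\<close> sqrt unfolding arc_path_def arc_len_def c_def[symmetric]
      by (simp add: cos_arccos_abs sin_arccos_abs)
  qed
qed

theorem lemma7p3:
  fixes M F F' :: "(real^'n) set" and f :: "real^'n \<Rightarrow> real" and h :: "real \<Rightarrow> real"
    and \<epsilon> :: real
  assumes "CARD('n) \<ge> 3"
    and "polytope M" and "interior M \<noteq> {}"
    and "F facet_of M" and "F' facet_of M"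
    and "aff_dim (F \<inter> F') = int CARD('n) - 2"
    and "H1_on (edge_len M F F') (f \<circ> edge_path M F F')"
    and "weak_deriv_L2 (edge_len M F F') (f \<circ> edge_path M F F') h"
    and "0 < \<epsilon>" and "\<epsilon> < 1"
  shows "(edge_len M F F')\<^sup>2 * (LINT t:{0..edge_len M F F'}|lborel. (h t)\<^sup>2)
     \<ge> (1 - \<epsilon>)\<^sup>2 * pi\<^sup>2 * (LINT t:{0..edge_len M F F'}|lborel. (f (edge_path M F F' t))\<^sup>2)
       - 2 / \<epsilon> * edge_len M F F' * ((f (outer_normal M F))\<^sup>2 + (f (outer_normal M F'))\<^sup>2)"
proof -
  have "polyhedron M"
    using assms(2) by (rule polytope_imp_polyhedron)
  then have unit: "norm (outer_normal M F) = 1" "norm (outer_normal M F') = 1"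
    using assms(3-5) by (simp_all add: norm_outer_normal)
  have "0 \<le> edge_len M F F'"
    unfolding edge_len_def using unit by (rule arc_len_nonneg)
  moreover have "edge_path M F F' 0 = outer_normal M F"
    "edge_path M F F' (edge_len M F F') = outer_normal M F'"
    unfolding edge_path_def edge_len_def using unit by (simp_all add: arc_path_0 arc_path_arc_len)
  ultimately show ?thesis
    using H1_wirtinger_inequality_with_boundary[OF _ assms(9,10,7,8)] by simp
qed

end
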